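(* Let $X,Y$ be Banach spaces, $f:X\to Y$ a function, $G:X\rightrightarrows Y$ a multifunction and $\overline{x}\in X$ such that $0\in f(\overline{x})+G(\overline{x})$. If $f$ is calm at $\overline{x}$, then $(f,G)$ is locally sum-stable around $(\overline{x},f(\overline{x}),-f(\overline{x}))$.
   Context: $f$ is calm at $\overline{x}$ if there exist $\alpha,l>0$ with $\|f(x)-f(\overline{x})\|\le l\|x-\overline{x}\|$ for all $x\in B(\overline{x},\alpha)$ ($B$ the open ball). For multifunctions $F,G:X\rightrightarrows Y$ and $(\overline{x},\overline{y},\overline{z})$ with $\overline{y}\in F(\overline{x})$, $\overline{z}\in G(\overline{x})$, the pair $(F,G)$ is locally sum-stable around $(\overline{x},\overline{y},\overline{z})$ if for every $\varepsilon>0$ there is $\delta>0$ such that for every $x\in B(\overline{x},\delta)$ and every $w\in(F+G)(x)\cap B(\overline{y}+\overline{z},\delta)$ there exist $y\in F(x)\cap B(\overline{y},\varepsilon)$ and $z\in G(x)\cap B(\overline{z},\varepsilon)$ with $w=y+z$. A function $f$ is viewed as the multifunction $x\mapsto\{f(x)\}$. *)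

theory Defs
  imports "HOL-Analysis.Analysis"
begin

definition calm_at :: "('a::real_normed_vector \<Rightarrow> 'b::real_normed_vector) \<Rightarrow> 'a \<Rightarrow> bool" where
  "calm_at f xb \<longleftrightarrow> (\<exists>\<alpha>>0. \<exists>l>0. \<forall>x\<in>ball xb \<alpha>. norm (f x - f xb) \<le> l * norm (x - xb))"

definition msum :: "('a \<Rightarrow> 'b::plus set) \<Rightarrow> ('a \<Rightarrow> 'b set) \<Rightarrow> 'a \<Rightarrow> 'b set" where
  "msum F G x = {y + z | y z. y \<in> F x \<and> z \<in> G x}"

definition locally_sum_stable ::
  "('a::metric_space \<Rightarrow> 'b::real_normed_vector set) \<Rightarrow> ('a \<Rightarrow> 'b set) \<Rightarrow> 'a \<Rightarrow> 'b \<Rightarrow> 'b \<Rightarrow> bool" where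
  "locally_sum_stable F G xb yb zb \<longleftrightarrow>
     (\<forall>\<epsilon>>0. \<exists>\<delta>>0. \<forall>x\<in>ball xb \<delta>. \<forall>w \<in> msum F G x \<inter> ball (yb + zb) \<delta>.
        \<exists>y\<in>F x \<inter> ball yb \<epsilon>. \<exists>z\<in>G x \<inter> ball zb \<epsilon>. w = y + z)"

end

theory Submission
  imports Defs
begin

text \<open>Only continuity of \<open>f\<close> at the base point matters: if \<open>w = f x + z\<close> is close to
  \<open>f xb + zb\<close> and \<open>x\<close> is close to \<open>xb\<close>, then \<open>f x\<close> is close to \<open>f xb\<close>, and
  \<open>z - zb = (w - (f xb + zb)) - (f x - f xb)\<close> is small as well.\<close>

lemma calm_at_imp_continuous_at:
  assumes "calm_at f xb"
  shows "continuous (at xb) f"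
proof -
  obtain \<alpha> l where "\<alpha> > 0" "l > 0"
    and calm: "\<And>x. x \<in> ball xb \<alpha> \<Longrightarrow> norm (f x - f xb) \<le> l * norm (x - xb)"
    using assms unfolding calm_at_def by blast
  show ?thesis
    unfolding continuous_at_eps_delta
  proof (intro allI impI)
    fix \<epsilon> :: real
    assume "\<epsilon> > 0"
    have "dist (f x) (f xb) < \<epsilon>" if "dist x xb < min \<alpha> (\<epsilon> / l)" for x
    proof -
      have "x \<in> ball xb \<alpha>" and close: "norm (x - xb) < \<epsilon> / l"
        using that by (auto simp: dist_commute dist_norm)
      have "norm (f x - f xb) \<le> l * norm (x - xb)"
        using calm \<open>x \<in> ball xb \<alpha>\<close> .
      also have "\<dots> < \<epsilon>"
        using close \<open>l > 0\<close> by (simp add: pos_less_divide_eq mult.commute)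
      finally show ?thesis by (simp add: dist_norm)
    qed
    then show "\<exists>\<delta>>0. \<forall>x. dist x xb < \<delta> \<longrightarrow> dist (f x) (f xb) < \<epsilon>"
      using \<open>\<alpha> > 0\<close> \<open>l > 0\<close> \<open>\<epsilon> > 0\<close> by (intro exI[of _ "min \<alpha> (\<epsilon> / l)"]) auto
  qed
qed

lemma locally_sum_stable_continuous:
  fixes f :: "'a::metric_space \<Rightarrow> 'b::real_normed_vector"
  assumes "continuous (at xb) f"
  shows "locally_sum_stable (\<lambda>x. {f x}) G xb (f xb) zb"
  unfolding locally_sum_stable_def
proof (intro allI impI)
  fix \<epsilon> :: real
  assume "\<epsilon> > 0"
  then obtain \<delta>\<^sub>f where "\<delta>\<^sub>f > 0" and cont: "\<And>x. dist x xb < \<delta>\<^sub>f \<Longrightarrow> dist (f x) (f xb) < \<epsilon> / 2"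
    using assms unfolding continuous_at_eps_delta by (meson half_gt_zero)
  define \<delta> where "\<delta> = min \<delta>\<^sub>f (\<epsilon> / 2)"
  have "\<exists>y\<in>{f x} \<inter> ball (f xb) \<epsilon>. \<exists>z\<in>G x \<inter> ball zb \<epsilon>. w = y + z"
    if x: "x \<in> ball xb \<delta>" and w: "w \<in> msum (\<lambda>x. {f x}) G x \<inter> ball (f xb + zb) \<delta>" for x w
  proof -
    obtain z where "z \<in> G x" and w_eq: "w = f x + z"
      using w unfolding msum_def by blast
    have f_close: "norm (f x - f xb) < \<epsilon> / 2"
      using cont[of x] x by (simp add: \<delta>_def dist_commute dist_norm)
    have w_close: "norm (w - (f xb + zb)) < \<epsilon> / 2"
      using w by (simp add: \<delta>_def dist_commute dist_norm)
    have "z - zb = (w - (f xb + zb)) - (f x - f xb)"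
      using w_eq by (simp add: algebra_simps)
    then have "norm (z - zb) \<le> norm (w - (f xb + zb)) + norm (f x - f xb)"
      by (metis norm_triangle_ineq4)
    then have "z \<in> ball zb \<epsilon>"
      using f_close w_close by (simp add: dist_norm norm_minus_commute)
    moreover have "f x \<in> ball (f xb) \<epsilon>"
      using f_close by (simp add: dist_norm norm_minus_commute) (smt (verit) norm_ge_zero)
    ultimately show ?thesis
      using \<open>z \<in> G x\<close> w_eq by blast
  qed
  moreover have "\<delta> > 0"
    using \<open>\<delta>\<^sub>f > 0\<close> \<open>\<epsilon> > 0\<close> by (simp add: \<delta>_def)
  ultimately show "\<exists>\<delta>>0. \<forall>x\<in>ball xb \<delta>. \<forall>w\<in>msum (\<lambda>x. {f x}) G x \<inter> ball (f xb + zb) \<delta>.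
      \<exists>y\<in>{f x} \<inter> ball (f xb) \<epsilon>. \<exists>z\<in>G x \<inter> ball zb \<epsilon>. w = y + z"
    by blast
qed

text \<open>The hypothesis \<open>0 \<in> f xb + G xb\<close> only makes the base point a point of the graph
  of \<open>f + G\<close>; the stability argument does not use it.\<close>

theorem proposition4p6:
  fixes f :: "'a::banach \<Rightarrow> 'b::banach"
    and G :: "'a \<Rightarrow> 'b set"
    and xb :: 'a
  assumes "0 \<in> msum (\<lambda>x. {f x}) G xb"
    and "calm_at f xb"
  shows "locally_sum_stable (\<lambda>x. {f x}) G xb (f xb) (- f xb)"
  using assms(2) by (intro locally_sum_stable_continuous calm_at_imp_continuous_at)

end
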